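(* For every $b,b'\in\mathbb R$ and all $p,q\in\Delta_d$, \[ \ell^\Theta_{\mathrm C}(L_bp,L_{b'}q)\le\ell^\Theta_{\mathrm C}(p,q)+\Delta^{-1/2}|b-b'|. \]
   Context: $\Theta=\{\theta_1<\dots<\theta_d\}$ with constant stride $\Delta>0$; $\Delta_d$ the probability simplex of $\mathbb R^d$. For $u\in\Delta_d$, $\eta^{u,0}:=\sum_ku_k\delta_{\theta_k}$. Categorical projection $\Pi^\Theta_{\mathrm C}$: $\delta_x\mapsto\delta_{\theta_1}$ if $x\le\theta_1$, $\delta_{\theta_d}$ if $x\ge\theta_d$, $\frac{\theta_{k+1}-x}{\Delta}\delta_{\theta_k}+\frac{x-\theta_k}{\Delta}\delta_{\theta_{k+1}}$ if $\theta_k\le x\le\theta_{k+1}$, extended linearly to laws. For $b\in\mathbb R$, $L_b:\Delta_d\to\Delta_d$ is defined by $\Pi^\Theta_{\mathrm C}(\text{law of }X+b,\ X\sim\eta^{u,0})=\eta^{L_bu,0}$. Coordinate Cramér metric: $F_u(\theta_k):=\sum_{j\le k}u_j$, $\ell^\Theta_{\mathrm C}(u,v)^2:=\Delta\sum_{k=1}^{d-1}(F_u(\theta_k)-F_v(\theta_k))^2$. *)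

theory Defs
  imports Complex_Main
begin

text \<open>Vectors in R^d are functions nat => real indexed by 1..d.\<close>

definition theta :: "real \<Rightarrow> real \<Rightarrow> nat \<Rightarrow> real" where
  "theta t1 Dl k = t1 + (real k - 1) * Dl"

definition simplex :: "nat \<Rightarrow> (nat \<Rightarrow> real) set" where
  "simplex d = {u. (\<forall>k\<in>{1..d}. 0 \<le> u k) \<and> (\<Sum>k=1..d. u k) = 1}"

text \<open>Categorical projection of the Dirac mass at x, as a weight vector on the grid.
  For theta_1 < x < theta_d, j is the index with theta_j <= x < theta_(j+1).\<close>
definition cat_proj_dirac :: "real \<Rightarrow> real \<Rightarrow> nat \<Rightarrow> real \<Rightarrow> nat \<Rightarrow> real" where
  "cat_proj_dirac t1 Dl d x k =
     (if x \<le> theta t1 Dl 1 then (if k = 1 then 1 else 0)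
      else if x \<ge> theta t1 Dl d then (if k = d then 1 else 0)
      else (let j = nat \<lfloor>(x - t1) / Dl\<rfloor> + 1 in
              if k = j then (theta t1 Dl (j+1) - x) / Dl
              else if k = j + 1 then (x - theta t1 Dl j) / Dl
              else 0))"

text \<open>L_b u: categorical projection of the law of X + b with X ~ sum_k u_k delta_theta_k
  (projection extended linearly to mixtures).\<close>
definition L_shift :: "real \<Rightarrow> real \<Rightarrow> nat \<Rightarrow> real \<Rightarrow> (nat \<Rightarrow> real) \<Rightarrow> (nat \<Rightarrow> real)" where
  "L_shift t1 Dl d b u = (\<lambda>k. \<Sum>j=1..d. u j * cat_proj_dirac t1 Dl d (theta t1 Dl j + b) k)"

definition cdf_vec :: "(nat \<Rightarrow> real) \<Rightarrow> nat \<Rightarrow> real" where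
  "cdf_vec u k = (\<Sum>j=1..k. u j)"

definition cramer_dist :: "real \<Rightarrow> nat \<Rightarrow> (nat \<Rightarrow> real) \<Rightarrow> (nat \<Rightarrow> real) \<Rightarrow> real" where
  "cramer_dist Dl d u v = sqrt (Dl * (\<Sum>k=1..d-1. (cdf_vec u k - cdf_vec v k)^2))"

end

theory Submission
  imports Defs "HOL-Analysis.L2_Norm" "HOL-Analysis.Convex"
begin

text \<open>The k-th coordinate of the CDF of the projected Dirac mass at y is a ramp h_k(y), falling from
  1 to 0 while y crosses [theta_k, theta_(k+1)], and the CDF of L_b u is sum_j u_j h_k(theta_j + b).
  Summation by parts writes the CDF difference of L_b p and L_b q as the CDF difference of p and q
  multiplied by the matrix of nonnegative entries h_k(theta_j + b) - h_k(theta_(j+1) + b). Its rows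
  and columns sum to at most 1, so by the Schur test L_b does not expand the Cramer distance.
  Since the ramps h_k fall on disjoint intervals, changing the shift from b to b' moves the CDF of
  L_b q by at most |b - b'|/Dl in l1-norm, hence in l2-norm. The triangle inequality combines both
  estimates.\<close>

lemma theta_Suc: "theta t1 Dl (Suc k) = theta t1 Dl k + Dl"
  by (simp add: theta_def algebra_simps)

lemma theta_mono: "Dl \<ge> 0 \<Longrightarrow> i \<le> j \<Longrightarrow> theta t1 Dl i \<le> theta t1 Dl j"
  by (simp add: theta_def mult_right_mono)

lemma theta_floor_index:
  assumes "Dl > 0" and "theta t1 Dl 1 < x"
  defines "j \<equiv> nat \<lfloor>(x - t1) / Dl\<rfloor> + 1"
  shows "theta t1 Dl j \<le> x" and "x < theta t1 Dl (Suc j)"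
proof -
  define r where "r = (x - t1) / Dl"
  have "0 < r"
    using assms by (simp add: theta_def r_def)
  then have "real j - 1 = of_int \<lfloor>r\<rfloor>"
    by (simp add: j_def r_def)
  then have "real j - 1 \<le> r" and "r < real j"
    by linarith+
  then have "(real j - 1) * Dl \<le> x - t1" and "x - t1 < real j * Dl"
    using assms(1) by (simp_all add: r_def le_divide_eq divide_less_eq)
  then show "theta t1 Dl j \<le> x" and "x < theta t1 Dl (Suc j)"
    by (simp_all add: theta_def)
qed

definition clamp :: "real \<Rightarrow> real \<Rightarrow> real \<Rightarrow> real" where
  "clamp a c y = max a (min c y)"

lemma clamp_split: "a \<le> b \<Longrightarrow> b \<le> c \<Longrightarrow> clamp a b y + clamp b c y = clamp a c y + b"
  by (simp add: clamp_def max_def min_def)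

lemma clamp_mono_diff_le:
  "a \<le> c \<Longrightarrow> x \<le> x' \<Longrightarrow>
    0 \<le> clamp a c x' - clamp a c x \<and> clamp a c x' - clamp a c x \<le> x' - x"
  by (simp add: clamp_def max_def min_def)

lemma sum_clamp_theta_diff:
  assumes "Dl \<ge> 0"
  shows "(\<Sum>k=1..n. clamp (theta t1 Dl k) (theta t1 Dl (Suc k)) y'
                    - clamp (theta t1 Dl k) (theta t1 Dl (Suc k)) y)
       = clamp (theta t1 Dl 1) (theta t1 Dl (Suc n)) y' - clamp (theta t1 Dl 1) (theta t1 Dl (Suc n)) y"
proof (induction n)
  case (Suc n)
  have "theta t1 Dl 1 \<le> theta t1 Dl (Suc n)" "theta t1 Dl (Suc n) \<le> theta t1 Dl (Suc (Suc n))"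
    using theta_mono[OF assms] by auto
  from clamp_split[OF this, of y] clamp_split[OF this, of y'] show ?case
    using Suc by (simp add: algebra_simps)
qed (simp add: clamp_def)

definition proj_dirac_cdf :: "real \<Rightarrow> real \<Rightarrow> nat \<Rightarrow> real \<Rightarrow> real" where
  "proj_dirac_cdf t1 Dl k y =
     (theta t1 Dl (Suc k) - clamp (theta t1 Dl k) (theta t1 Dl (Suc k)) y) / Dl"

lemma proj_dirac_cdf_bounds: "Dl > 0 \<Longrightarrow> 0 \<le> proj_dirac_cdf t1 Dl k y \<and> proj_dirac_cdf t1 Dl k y \<le> 1"
  by (simp add: proj_dirac_cdf_def clamp_def theta_Suc max_def min_def divide_simps)

lemma proj_dirac_cdf_eq_1: "Dl > 0 \<Longrightarrow> y \<le> theta t1 Dl k \<Longrightarrow> proj_dirac_cdf t1 Dl k y = 1"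
  by (simp add: proj_dirac_cdf_def clamp_def theta_Suc)

lemma proj_dirac_cdf_eq_0: "Dl > 0 \<Longrightarrow> theta t1 Dl (Suc k) \<le> y \<Longrightarrow> proj_dirac_cdf t1 Dl k y = 0"
  by (simp add: proj_dirac_cdf_def clamp_def theta_Suc)

lemma proj_dirac_cdf_antimono:
  assumes "Dl > 0" and "y \<le> y'"
  shows "proj_dirac_cdf t1 Dl k y' \<le> proj_dirac_cdf t1 Dl k y"
  using clamp_mono_diff_le[OF theta_mono assms(2), of Dl k "Suc k" t1] assms(1)
  by (simp add: proj_dirac_cdf_def divide_right_mono)

lemma sum_proj_dirac_cdf_diff_le:
  assumes "Dl > 0" and "y \<le> y'"
  shows "(\<Sum>k=1..n. proj_dirac_cdf t1 Dl k y - proj_dirac_cdf t1 Dl k y') \<le> (y' - y) / Dl"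
proof -
  have "(\<Sum>k=1..n. proj_dirac_cdf t1 Dl k y - proj_dirac_cdf t1 Dl k y')
      = (\<Sum>k=1..n. clamp (theta t1 Dl k) (theta t1 Dl (Suc k)) y'
                    - clamp (theta t1 Dl k) (theta t1 Dl (Suc k)) y) / Dl"
    by (simp add: proj_dirac_cdf_def sum_divide_distrib diff_divide_distrib)
  also have "\<dots> = (clamp (theta t1 Dl 1) (theta t1 Dl (Suc n)) y'
                    - clamp (theta t1 Dl 1) (theta t1 Dl (Suc n)) y) / Dl"
    using sum_clamp_theta_diff[OF less_imp_le[OF assms(1)]] by simp
  also have "\<dots> \<le> (y' - y) / Dl"
    using clamp_mono_diff_le[OF theta_mono assms(2), of Dl 1 "Suc n" t1] assms(1)
    by (simp add: divide_right_mono)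
  finally show ?thesis .
qed

lemma sum_abs_proj_dirac_cdf_diff_le:
  assumes "Dl > 0"
  shows "(\<Sum>k=1..n. \<bar>proj_dirac_cdf t1 Dl k y - proj_dirac_cdf t1 Dl k y'\<bar>) \<le> \<bar>y - y'\<bar> / Dl"
proof (cases "y \<le> y'")
  case True
  then show ?thesis
    using sum_proj_dirac_cdf_diff_le[OF assms True] proj_dirac_cdf_antimono[OF assms True]
    by simp
next
  case False
  then have y'y: "y' \<le> y" by simp
  show ?thesis
    using sum_proj_dirac_cdf_diff_le[OF assms y'y] proj_dirac_cdf_antimono[OF assms y'y] y'y
    by simp
qed

lemma cdf_cat_proj_dirac:
  assumes "Dl > 0" and "1 \<le> k" and "k < d"
  shows "cdf_vec (cat_proj_dirac t1 Dl d x) k = proj_dirac_cdf t1 Dl k x"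
proof -
  consider (left) "x \<le> theta t1 Dl 1" | (right) "theta t1 Dl 1 < x" "theta t1 Dl d \<le> x"
    | (inner) "theta t1 Dl 1 < x" "x < theta t1 Dl d"
    by linarith
  then show ?thesis
  proof cases
    case left
    then have "x \<le> theta t1 Dl k"
      using theta_mono[of Dl 1 k t1] assms by linarith
    then show ?thesis
      using left assms by (simp add: cdf_vec_def cat_proj_dirac_def proj_dirac_cdf_eq_1)
  next
    case right
    then have "theta t1 Dl (Suc k) \<le> x"
      using theta_mono[of Dl "Suc k" d t1] assms by linarith
    then show ?thesis
      using right assms by (simp add: cdf_vec_def cat_proj_dirac_def proj_dirac_cdf_eq_0)
  next
    case inner
    define j where "j = nat \<lfloor>(x - t1) / Dl\<rfloor> + 1"
    have cell: "theta t1 Dl j \<le> x" "x < theta t1 Dl (Suc j)"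
      using theta_floor_index[OF assms(1) inner(1)] by (simp_all add: j_def)
    define A where "A = (theta t1 Dl (Suc j) - x) / Dl"
    define B where "B = (x - theta t1 Dl j) / Dl"
    have "A + B = 1"
      using assms(1) by (simp add: A_def B_def theta_Suc field_simps)
    have "cat_proj_dirac t1 Dl d x = (\<lambda>i. (if i = j then A else 0) + (if i = Suc j then B else 0))"
      using inner by (auto simp: cat_proj_dirac_def Let_def j_def A_def B_def)
    then have cdf: "cdf_vec (cat_proj_dirac t1 Dl d x) k
                    = (if j \<le> k then A else 0) + (if Suc j \<le> k then B else 0)"
      by (simp add: cdf_vec_def sum.distrib j_def)
    consider "k < j" | "k = j" | "Suc j \<le> k"
      by linarith
    then show ?thesis
    proof cases
      case 1
      then have "theta t1 Dl (Suc k) \<le> x"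
        using cell theta_mono[of Dl "Suc k" j t1] assms(1) by simp
      then show ?thesis
        using 1 cdf assms(1) by (simp add: proj_dirac_cdf_eq_0)
    next
      case 2
      then show ?thesis
        using cdf cell by (simp add: proj_dirac_cdf_def clamp_def A_def)
    next
      case 3
      then have "x \<le> theta t1 Dl k"
        using cell theta_mono[of Dl "Suc j" k t1] assms(1) by simp
      then show ?thesis
        using 3 cdf assms(1) \<open>A + B = 1\<close> by (simp add: proj_dirac_cdf_eq_1)
    qed
  qed
qed

lemma cdf_L_shift:
  assumes "Dl > 0" and "1 \<le> k" and "k < d"
  shows "cdf_vec (L_shift t1 Dl d b u) k = (\<Sum>j=1..d. u j * proj_dirac_cdf t1 Dl k (theta t1 Dl j + b))"
proof -
  have "cdf_vec (L_shift t1 Dl d b u) k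
      = (\<Sum>j=1..d. u j * cdf_vec (cat_proj_dirac t1 Dl d (theta t1 Dl j + b)) k)"
    unfolding cdf_vec_def L_shift_def sum_distrib_left by (rule sum.swap)
  then show ?thesis
    using cdf_cat_proj_dirac[OF assms] by simp
qed

lemma sum_mult_by_parts:
  "(\<Sum>j=1..Suc m. u j * a j)
     = cdf_vec u (Suc m) * a (Suc m) + (\<Sum>j=1..m. cdf_vec u j * (a j - a (Suc j)))"
  by (induction m) (simp_all add: cdf_vec_def algebra_simps)

lemma cdf_L_shift_diff_eq:
  assumes "Dl > 0" and "1 \<le> k" and "k \<le> m" and "cdf_vec p (Suc m) = cdf_vec q (Suc m)"
  shows "cdf_vec (L_shift t1 Dl (Suc m) b p) k - cdf_vec (L_shift t1 Dl (Suc m) b q) k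
       = (\<Sum>j=1..m. (proj_dirac_cdf t1 Dl k (theta t1 Dl j + b)
                       - proj_dirac_cdf t1 Dl k (theta t1 Dl (Suc j) + b)) * (cdf_vec p j - cdf_vec q j))"
proof -
  let ?a = "\<lambda>j. proj_dirac_cdf t1 Dl k (theta t1 Dl j + b)"
  have "cdf_vec (L_shift t1 Dl (Suc m) b p) k - cdf_vec (L_shift t1 Dl (Suc m) b q) k
      = (\<Sum>j=1..Suc m. p j * ?a j) - (\<Sum>j=1..Suc m. q j * ?a j)"
    using assms(1-3) by (simp only: cdf_L_shift less_Suc_eq_le)
  also have "\<dots> = (\<Sum>j=1..m. cdf_vec p j * (?a j - ?a (Suc j)))
                  - (\<Sum>j=1..m. cdf_vec q j * (?a j - ?a (Suc j)))"
    unfolding sum_mult_by_parts assms(4) by simp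
  also have "\<dots> = (\<Sum>j=1..m. (?a j - ?a (Suc j)) * (cdf_vec p j - cdf_vec q j))"
    unfolding sum_subtractf[symmetric] by (intro sum.cong) (simp_all add: algebra_simps)
  finally show ?thesis .
qed

lemma schur_test_sum_power2_le:
  fixes w :: "'k \<Rightarrow> 'j \<Rightarrow> real"
  assumes nonneg: "\<And>k j. k \<in> K \<Longrightarrow> j \<in> J \<Longrightarrow> 0 \<le> w k j"
    and rows: "\<And>k. k \<in> K \<Longrightarrow> (\<Sum>j\<in>J. w k j) \<le> 1"
    and cols: "\<And>j. j \<in> J \<Longrightarrow> (\<Sum>k\<in>K. w k j) \<le> 1"
  shows "(\<Sum>k\<in>K. (\<Sum>j\<in>J. w k j * x j)\<^sup>2) \<le> (\<Sum>j\<in>J. (x j)\<^sup>2)"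
proof -
  have row_jensen: "(\<Sum>j\<in>J. w k j * x j)\<^sup>2 \<le> (\<Sum>j\<in>J. w k j * (x j)\<^sup>2)" if "k \<in> K" for k
  proof -
    have "(\<Sum>j\<in>J. w k j * x j)\<^sup>2 = (\<Sum>j\<in>J. sqrt (w k j) * (sqrt (w k j) * x j))\<^sup>2"
      using nonneg[OF that] by (simp add: mult.assoc[symmetric])
    also have "\<dots> \<le> (\<Sum>j\<in>J. (sqrt (w k j))\<^sup>2) * (\<Sum>j\<in>J. (sqrt (w k j) * x j)\<^sup>2)"
      by (rule Cauchy_Schwarz_ineq_sum)
    also have "\<dots> = (\<Sum>j\<in>J. w k j) * (\<Sum>j\<in>J. w k j * (x j)\<^sup>2)"
      using nonneg[OF that] by (simp add: power_mult_distrib)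
    also have "\<dots> \<le> (\<Sum>j\<in>J. w k j * (x j)\<^sup>2)"
      using rows[OF that] nonneg[OF that] by (intro mult_left_le_one_le sum_nonneg) auto
    finally show ?thesis .
  qed
  have "(\<Sum>k\<in>K. (\<Sum>j\<in>J. w k j * x j)\<^sup>2) \<le> (\<Sum>k\<in>K. \<Sum>j\<in>J. w k j * (x j)\<^sup>2)"
    using row_jensen by (rule sum_mono)
  also have "\<dots> = (\<Sum>j\<in>J. (\<Sum>k\<in>K. w k j) * (x j)\<^sup>2)"
    by (subst sum.swap) (simp add: sum_distrib_right)
  also have "\<dots> \<le> (\<Sum>j\<in>J. (x j)\<^sup>2)"
    using cols nonneg by (intro sum_mono mult_left_le_one_le sum_nonneg) auto
  finally show ?thesis .
qed

lemma cramer_dist_eq_L2_set: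
  "cramer_dist Dl d u v = sqrt Dl * L2_set (\<lambda>k. cdf_vec u k - cdf_vec v k) {1..d-1}"
  by (simp add: cramer_dist_def L2_set_def real_sqrt_mult)

lemma cramer_dist_triangle:
  assumes "Dl \<ge> 0"
  shows "cramer_dist Dl d u w \<le> cramer_dist Dl d u v + cramer_dist Dl d v w"
proof -
  have "L2_set (\<lambda>k. cdf_vec u k - cdf_vec w k) {1..d-1}
      \<le> L2_set (\<lambda>k. cdf_vec u k - cdf_vec v k) {1..d-1} + L2_set (\<lambda>k. cdf_vec v k - cdf_vec w k) {1..d-1}"
    using L2_set_triangle_ineq[of "\<lambda>k. cdf_vec u k - cdf_vec v k" "\<lambda>k. cdf_vec v k - cdf_vec w k"]
    by simp
  then show ?thesis
    unfolding cramer_dist_eq_L2_set using assms by (simp add: mult_left_mono flip: distrib_left)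
qed

lemma cramer_dist_L_shift_le:
  assumes "Dl > 0" and "(\<Sum>j=1..d. p j) = (\<Sum>j=1..d. q j)"
  shows "cramer_dist Dl d (L_shift t1 Dl d b p) (L_shift t1 Dl d b q) \<le> cramer_dist Dl d p q"
proof (cases d)
  case 0
  then show ?thesis by (simp add: cramer_dist_def)
next
  case (Suc m)
  define a where "a k j = proj_dirac_cdf t1 Dl k (theta t1 Dl j + b)" for k j
  define w where "w k j = a k j - a k (Suc j)" for k j
  have nonneg: "0 \<le> w k j" for k j
    using proj_dirac_cdf_antimono[OF assms(1), of "theta t1 Dl j + b" "theta t1 Dl (Suc j) + b"] assms(1)
    by (simp add: w_def a_def theta_Suc)
  have rows: "(\<Sum>j\<in>{1..m}. w k j) \<le> 1" for k
  proof -
    have "(\<Sum>j\<in>{1..m}. w k j) = a k 1 - a k (Suc m)"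
      using sum_Suc_diff[of 1 m "\<lambda>j. - a k j"] by (simp add: w_def)
    then show ?thesis
      using proj_dirac_cdf_bounds[OF assms(1), of t1 k "theta t1 Dl 1 + b"]
        proj_dirac_cdf_bounds[OF assms(1), of t1 k "theta t1 Dl (Suc m) + b"]
      by (simp add: a_def)
  qed
  have cols: "(\<Sum>k\<in>{1..m}. w k j) \<le> 1" for j
    using sum_proj_dirac_cdf_diff_le[OF assms(1), of "theta t1 Dl j + b" "theta t1 Dl (Suc j) + b"] assms(1)
    by (simp add: w_def a_def theta_Suc)
  have "cdf_vec p (Suc m) = cdf_vec q (Suc m)"
    using assms(2) Suc by (simp add: cdf_vec_def)
  then have "(\<Sum>k=1..m. (cdf_vec (L_shift t1 Dl d b p) k - cdf_vec (L_shift t1 Dl d b q) k)\<^sup>2)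
      = (\<Sum>k\<in>{1..m}. (\<Sum>j\<in>{1..m}. w k j * (cdf_vec p j - cdf_vec q j))\<^sup>2)"
    using Suc assms(1) by (intro sum.cong) (simp_all add: cdf_L_shift_diff_eq w_def a_def)
  also have "\<dots> \<le> (\<Sum>j=1..m. (cdf_vec p j - cdf_vec q j)\<^sup>2)"
    using nonneg rows cols by (intro schur_test_sum_power2_le)
  finally show ?thesis
    using Suc assms(1) by (simp add: cramer_dist_def)
qed

lemma sum_abs_cdf_L_shift_diff_le:
  assumes "Dl > 0" and "q \<in> simplex d"
  shows "(\<Sum>k=1..d-1. \<bar>cdf_vec (L_shift t1 Dl d b q) k - cdf_vec (L_shift t1 Dl d b' q) k\<bar>)
      \<le> \<bar>b - b'\<bar> / Dl"
proof -
  have q_nonneg: "\<And>j. j \<in> {1..d} \<Longrightarrow> 0 \<le> q j" and q_sum: "(\<Sum>j=1..d. q j) = 1"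
    using assms(2) by (auto simp: simplex_def)
  define g where
    "g k j = \<bar>proj_dirac_cdf t1 Dl k (theta t1 Dl j + b) - proj_dirac_cdf t1 Dl k (theta t1 Dl j + b')\<bar>"
    for k j
  have "(\<Sum>k=1..d-1. \<bar>cdf_vec (L_shift t1 Dl d b q) k - cdf_vec (L_shift t1 Dl d b' q) k\<bar>)
      \<le> (\<Sum>k=1..d-1. \<Sum>j=1..d. q j * g k j)"
  proof (rule sum_mono)
    fix k assume "k \<in> {1..d-1}"
    then have k: "1 \<le> k" "k < d"
      by auto
    have "cdf_vec (L_shift t1 Dl d b q) k - cdf_vec (L_shift t1 Dl d b' q) k
        = (\<Sum>j=1..d. q j * (proj_dirac_cdf t1 Dl k (theta t1 Dl j + b) - proj_dirac_cdf t1 Dl k (theta t1 Dl j + b')))"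
      by (simp add: cdf_L_shift[OF assms(1) k] sum_subtractf right_diff_distrib)
    also have "\<bar>\<dots>\<bar> \<le> (\<Sum>j=1..d. q j * g k j)"
      using q_nonneg by (auto simp: g_def abs_mult intro: order_trans[OF sum_abs] sum_mono)
    finally show "\<bar>cdf_vec (L_shift t1 Dl d b q) k - cdf_vec (L_shift t1 Dl d b' q) k\<bar>
        \<le> (\<Sum>j=1..d. q j * g k j)" .
  qed
  also have "\<dots> = (\<Sum>j=1..d. q j * (\<Sum>k=1..d-1. g k j))"
    unfolding sum_distrib_left by (rule sum.swap)
  also have "\<dots> \<le> (\<Sum>j=1..d. q j * (\<bar>b - b'\<bar> / Dl))"
  proof (intro sum_mono mult_left_mono)
    show "(\<Sum>k=1..d-1. g k j) \<le> \<bar>b - b'\<bar> / Dl" for j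
      using sum_abs_proj_dirac_cdf_diff_le[OF assms(1),
          where n = "d-1" and y = "theta t1 Dl j + b" and y' = "theta t1 Dl j + b'"]
      by (simp add: g_def)
  qed (use q_nonneg in simp)
  also have "\<dots> = \<bar>b - b'\<bar> / Dl"
    unfolding sum_distrib_right[symmetric] q_sum by simp
  finally show ?thesis .
qed

lemma cramer_dist_L_shift_shift_le:
  assumes "Dl > 0" and "q \<in> simplex d"
  shows "cramer_dist Dl d (L_shift t1 Dl d b q) (L_shift t1 Dl d b' q) \<le> \<bar>b - b'\<bar> / sqrt Dl"
proof -
  have "cramer_dist Dl d (L_shift t1 Dl d b q) (L_shift t1 Dl d b' q)
      \<le> sqrt Dl * (\<Sum>k=1..d-1. \<bar>cdf_vec (L_shift t1 Dl d b q) k - cdf_vec (L_shift t1 Dl d b' q) k\<bar>)"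
    unfolding cramer_dist_eq_L2_set using assms(1) by (intro mult_left_mono L2_set_le_sum_abs) simp
  also have "\<dots> \<le> sqrt Dl * (\<bar>b - b'\<bar> / Dl)"
    using sum_abs_cdf_L_shift_diff_le[OF assms] assms(1) by (intro mult_left_mono) simp_all
  also have "\<dots> = \<bar>b - b'\<bar> / sqrt Dl"
    using assms(1) by (simp add: field_simps flip: real_sqrt_mult)
  finally show ?thesis .
qed

theorem lemma6:
  fixes t1 Dl b b' :: real and d :: nat and p q :: "nat \<Rightarrow> real"
  assumes "Dl > 0"
    and "p \<in> simplex d" and "q \<in> simplex d"
  shows "cramer_dist Dl d (L_shift t1 Dl d b p) (L_shift t1 Dl d b' q)
           \<le> cramer_dist Dl d p q + \<bar>b - b'\<bar> / sqrt Dl"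
proof -
  have "(\<Sum>j=1..d. p j) = (\<Sum>j=1..d. q j)"
    using assms(2,3) by (simp add: simplex_def)
  then have "cramer_dist Dl d (L_shift t1 Dl d b p) (L_shift t1 Dl d b q) \<le> cramer_dist Dl d p q"
    by (rule cramer_dist_L_shift_le[OF assms(1)])
  moreover have "cramer_dist Dl d (L_shift t1 Dl d b q) (L_shift t1 Dl d b' q) \<le> \<bar>b - b'\<bar> / sqrt Dl"
    by (rule cramer_dist_L_shift_shift_le[OF assms(1,3)])
  ultimately show ?thesis
    using cramer_dist_triangle[of Dl d "L_shift t1 Dl d b p" "L_shift t1 Dl d b' q" "L_shift t1 Dl d b q"] assms(1)
    by linarith
qed

end
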